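(* Let $\mathcal{A}$ be a pOC with state set $Q$ and let $p,q\in Q$ be such that $[p{\downarrow}q]>0$ and $q$ is not in a bottom strongly connected component of $\mathcal{X}$. Then $$E(p{\downarrow}q)\le \frac{5|Q|}{x_{\min}^{|Q|+|Q|^3}}.$$
   Context: A pOC is $\mathcal{A}=(Q,\delta^{=0},\delta^{>0},P^{=0},P^{>0})$ with the following components. - $Q$ is a finite set of states. - $\delta^{>0}\subseteq Q\times\{-1,0,1\}\times Q$ is the set of positive rules and $\delta^{=0}\subseteq Q\times\{0,1\}\times Q$ is the set of zero rules. Every state has an outgoing positive rule and an outgoing zero rule. - $P^{>0}$ and $P^{=0}$ assign to each state a positive rational probability distribution over its outgoing positive rules and over its outgoing zero rules, respectively. The Markov chain $\mathcal{M}_\mathcal{A}$ on configurations $p(i)$ has the following transitions: - $p(0)\to q(c)$ with probability $P^{=0}(p,c,q)$; - for $i\ge1$, $p(i)\to q(i+c)$ with probability $P^{>0}(p,c,q)$. $\mathrm{Run}(p{\downarrow}q)$ is the set of runs from $p(1)$ that visit $q(0)$ with the counter positive before that visit, and $[p{\downarrow}q]$ is its probability. $E(p{\downarrow}q)$ is the conditional expected number of transitions until the first visit of $q(0)$, given $\mathrm{Run}(p{\downarrow}q)$. $\mathcal{X}$ is the underlying finite Markov chain of $\mathcal{A}$. Its state set is $Q$ and its transition matrix is $A$ with $A_{pq}=\sum_{c}P^{>0}(p,c,q)$. $x_{\min}$ is the least positive probability used in the rules of $\mathcal{A}$. *)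

theory Defs
  imports "HOL-Analysis.Analysis" "HOL-Library.Extended_Nonnegative_Real"
begin

text \<open>A pOC over the finite state type 'q (so Q = UNIV, |Q| = CARD('q)).
  Pz p c q is the probability of the zero rule (p,c,q), Pp p c q that of the
  positive rule (p,c,q); a rule exists iff its probability is positive.\<close>

definition pOC :: "('q::finite \<Rightarrow> int \<Rightarrow> 'q \<Rightarrow> real) \<Rightarrow> ('q \<Rightarrow> int \<Rightarrow> 'q \<Rightarrow> real) \<Rightarrow> bool" where
  "pOC Pz Pp \<longleftrightarrow>
     (\<forall>p c q. Pz p c q \<ge> 0 \<and> Pp p c q \<ge> 0) \<and>
     (\<forall>p c q. Pz p c q \<in> \<rat> \<and> Pp p c q \<in> \<rat>) \<and>
     (\<forall>p c q. Pp p c q > 0 \<longrightarrow> c \<in> {-1, 0, 1}) \<and>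
     (\<forall>p c q. Pz p c q > 0 \<longrightarrow> c \<in> {0, 1}) \<and>
     (\<forall>p. (\<Sum>c\<in>{-1,0,1}. \<Sum>q\<in>UNIV. Pp p c q) = 1) \<and>
     (\<forall>p. (\<Sum>c\<in>{0,1}. \<Sum>q\<in>UNIV. Pz p c q) = 1)"

text \<open>hit Pp n p i q: probability (in the Markov chain M_A) of the runs from p(i)
  which are in configuration q(0) after exactly n steps and have positive
  counter in all configurations before. Only positive rules are used, since
  the counter is positive before that visit.\<close>

fun hit :: "('q::finite \<Rightarrow> int \<Rightarrow> 'q \<Rightarrow> real) \<Rightarrow> nat \<Rightarrow> 'q \<Rightarrow> nat \<Rightarrow> 'q \<Rightarrow> real" where
  "hit Pp 0 p i q = (if i = 0 \<and> p = q then 1 else 0)"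
| "hit Pp (Suc n) p i q =
     (if i = 0 then 0
      else (\<Sum>c\<in>{-1,0,1}. \<Sum>r\<in>UNIV. Pp p c r * hit Pp n r (nat (int i + c)) q))"

definition termprob :: "('q::finite \<Rightarrow> int \<Rightarrow> 'q \<Rightarrow> real) \<Rightarrow> 'q \<Rightarrow> 'q \<Rightarrow> real" where
  "termprob Pp p q = (\<Sum>n. hit Pp n p 1 q)"

text \<open>E(p\<down>q): conditional expected number of transitions until the first
  visit of q(0), given Run(p\<down>q) (possibly infinite, hence ennreal).\<close>
definition condexp :: "('q::finite \<Rightarrow> int \<Rightarrow> 'q \<Rightarrow> real) \<Rightarrow> 'q \<Rightarrow> 'q \<Rightarrow> ennreal" where
  "condexp Pp p q = (\<Sum>n. ennreal (real n * hit Pp n p 1 q)) / ennreal (termprob Pp p q)"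

definition Xmat :: "('q::finite \<Rightarrow> int \<Rightarrow> 'q \<Rightarrow> real) \<Rightarrow> 'q \<Rightarrow> 'q \<Rightarrow> real" where
  "Xmat Pp p q = (\<Sum>c\<in>{-1,0,1}. Pp p c q)"

definition Xedges :: "('q::finite \<Rightarrow> int \<Rightarrow> 'q \<Rightarrow> real) \<Rightarrow> ('q \<times> 'q) set" where
  "Xedges Pp = {(p, q). Xmat Pp p q > 0}"

definition in_bscc :: "('q::finite \<Rightarrow> int \<Rightarrow> 'q \<Rightarrow> real) \<Rightarrow> 'q \<Rightarrow> bool" where
  "in_bscc Pp q \<longleftrightarrow> (\<forall>r. (q, r) \<in> (Xedges Pp)\<^sup>* \<longrightarrow> (r, q) \<in> (Xedges Pp)\<^sup>*)"

definition xmin :: "('q::finite \<Rightarrow> int \<Rightarrow> 'q \<Rightarrow> real) \<Rightarrow> ('q \<Rightarrow> int \<Rightarrow> 'q \<Rightarrow> real) \<Rightarrow> real" where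
  "xmin Pz Pp = Min ({Pz p c q | p c q. Pz p c q > 0} \<union> {Pp p c q | p c q. Pp p c q > 0})"

end

theory Submission
  imports Defs
begin

text \<open>
  A run from \<open>p(1)\<close> that has not reached \<open>q(0)\<close> after \<open>n\<close> steps has so far kept a positive
  counter and stayed among the states from which \<open>q\<close> is reachable in \<open>\<X>\<close>. As \<open>q\<close> is not in a
  bottom SCC, from each such state some path of fewer than \<open>|Q|\<close> steps leads to a state that
  cannot return to \<open>q\<close>; hence the probability of this survival decays like
  \<open>(1 - x_min ^ |Q|) ^ (n div |Q|)\<close>, and the numerator of \<open>E(p\<down>q)\<close> is at most
  \<open>|Q| / x_min ^ |Q|\<close>.

  For the denominator, a shortest run from \<open>p(1)\<close> to \<open>q(0)\<close> repeats no configuration and never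
  exceeds counter value \<open>|Q|^2\<close>, so it has at most \<open>|Q|^3\<close> steps and
  \<open>[p\<down>q] \<ge> x_min ^ |Q|^3\<close>.
\<close>

section \<open>Paths in relations\<close>

text \<open>The path \<open>g\<close> follows \<open>f\<close> up to \<open>L\<close>, then the image under \<open>h\<close> of the segment of \<open>f\<close>
  from \<open>a\<close> to \<open>b\<close>, then \<open>f\<close> from \<open>B\<close> on. With \<open>h = id\<close> and \<open>L = a = b\<close> this removes a loop.\<close>

lemma path_splice:
  assumes path: "\<forall>i<n. (f i, f (Suc i)) \<in> R"
    and bounds: "L \<le> n" "a \<le> b" "B \<le> n"
    and moved: "\<And>u. a \<le> u \<Longrightarrow> u < b \<Longrightarrow> (h (f u), h (f (Suc u))) \<in> R"
    and glue: "h (f a) = f L" "h (f b) = f B"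
  shows "\<exists>g. g 0 = f 0 \<and> g (L + (b - a) + (n - B)) = f n \<and>
    (\<forall>i < L + (b - a) + (n - B). (g i, g (Suc i)) \<in> R)"
proof -
  define m where "m = L + (b - a)"
  define g where "g s = (if s < L then f s else if s \<le> m then h (f (a + (s - L)))
    else f (B + (s - m)))" for s
  have "g 0 = f 0"
    using glue(1) by (cases "L = 0") (simp_all add: g_def)
  moreover have "g (m + (n - B)) = f n"
    using glue(2) bounds by (cases "B = n") (auto simp: g_def m_def)
  moreover have "(g i, g (Suc i)) \<in> R" if i: "i < m + (n - B)" for i
  proof -
    consider "Suc i < L" | "Suc i = L" | "L \<le> i" "i < m" | "i = m" | "m < i"
      by linarith
    then show ?thesis
    proof cases
      case 1
      then show ?thesis using path bounds by (simp add: g_def m_def)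
    next
      case 2
      then show ?thesis using path bounds glue(1) by (auto simp: g_def m_def)
    next
      case 3
      then have "g i = h (f (a + (i - L)))" "g (Suc i) = h (f (Suc (a + (i - L))))"
        by (auto simp: g_def m_def Suc_diff_le)
      then show ?thesis using moved 3 by (simp add: m_def)
    next
      case 4
      then have "g i = f B" "g (Suc i) = f (Suc B)"
        using glue(2) bounds by (auto simp: g_def m_def)
      then show ?thesis using path i 4 by simp
    next
      case 5
      then have "g i = f (B + (i - m))" "g (Suc i) = f (Suc (B + (i - m)))"
        by (auto simp: g_def m_def Suc_diff_le)
      then show ?thesis using path i 5 by simp
    qed
  qed
  ultimately show ?thesis
    unfolding m_def by blast
qed

lemma minimal_path_inj:
  assumes path: "\<forall>i<m. (f i, f (Suc i)) \<in> R"
    and minimal: "\<And>k. k < m \<Longrightarrow> (f 0, f m) \<notin> R ^^ k"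
  shows "inj_on f {..m}"
proof (rule ccontr)
  assume "\<not> inj_on f {..m}"
  then obtain a b where ab: "a < b" "b \<le> m" "f a = f b"
    unfolding inj_on_def by (metis atMost_iff linorder_neqE_nat)
  then obtain g where "g 0 = f 0" "g (a + (m - b)) = f m"
      "\<forall>i < a + (m - b). (g i, g (Suc i)) \<in> R"
    using path_splice[OF path, of a a a b id] by auto
  then have "(f 0, f m) \<in> R ^^ (a + (m - b))"
    unfolding relpow_fun_conv by blast
  then show False
    using minimal[of "a + (m - b)"] ab by linarith
qed

lemma rtrancl_relpow_less_card:
  fixes R :: "('a::finite \<times> 'a) set"
  assumes "(x, y) \<in> R\<^sup>*"
  shows "\<exists>k < CARD('a). (x, y) \<in> R ^^ k"
proof -
  obtain n where "(x, y) \<in> R ^^ n"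
    using assms by (auto simp: rtrancl_power)
  define m where "m = (LEAST m. (x, y) \<in> R ^^ m)"
  have m: "(x, y) \<in> R ^^ m"
    unfolding m_def by (rule LeastI) fact
  then obtain f where f: "f 0 = x" "f m = y" "\<forall>i<m. (f i, f (Suc i)) \<in> R"
    unfolding relpow_fun_conv by blast
  have "inj_on f {..m}"
    using f not_less_Least[of _ "\<lambda>m. (x, y) \<in> R ^^ m"]
    by (intro minimal_path_inj) (auto simp: m_def)
  then have "card {..m} \<le> CARD('a)"
    by (rule card_inj_on_le) auto
  then show ?thesis
    using m by (intro exI[of _ m]) auto
qed

lemma level_crossing_window:
  fixes c :: "nat \<Rightarrow> nat"
  assumes steps: "\<And>s. s < n \<Longrightarrow> c (Suc s) \<le> c s + 1 \<and> c s \<le> c (Suc s) + 1"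
    and ends: "c 0 \<le> j" "c n < j"
    and t: "t \<le> n" "j \<le> c t"
  defines "a \<equiv> GREATEST s. s \<le> t \<and> c s = j" and "b \<equiv> LEAST s. t \<le> s \<and> s \<le> n \<and> c s = j"
  shows "a \<le> t" "t \<le> b" "b < n" "c a = j" "c b = j" "\<And>s. a \<le> s \<Longrightarrow> s \<le> b \<Longrightarrow> j \<le> c s"
proof -
  have lip: "\<bar>int (c (Suc s)) - int (c s)\<bar> \<le> 1" if "s < n" for s
    using steps[OF that] by linarith
  have up: "\<exists>s. s1 \<le> s \<and> s \<le> s2 \<and> c s = j"
    if "s1 \<le> s2" "s2 \<le> n" "c s1 \<le> j" "j \<le> c s2" for s1 s2
  proof -
    have "\<exists>s. s1 \<le> s \<and> s \<le> s2 \<and> int (c s) = int j"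
      by (rule nat_intermed_int_val) (use lip that in auto)
    then show ?thesis
      by simp
  qed
  have down: "\<exists>s. s1 \<le> s \<and> s \<le> s2 \<and> c s = j"
    if "s1 \<le> s2" "s2 \<le> n" "j \<le> c s1" "c s2 \<le> j" for s1 s2
  proof -
    have "\<exists>s. s1 \<le> s \<and> s \<le> s2 \<and> - int (c s) = - int j"
      by (rule nat_intermed_int_val) (use lip that in \<open>auto simp: abs_minus_commute\<close>)
    then show ?thesis
      by simp
  qed
  obtain s0 where s0: "s0 \<le> t" "c s0 = j"
    using up[of 0 t] ends t by auto
  have a: "a \<le> t \<and> c a = j"
    unfolding a_def by (rule GreatestI_nat[of _ s0 t]) (use s0 in auto)
  have a_max: "s \<le> a" if "s \<le> t" "c s = j" for s
    unfolding a_def by (rule Greatest_le_nat[of _ s t]) (use that in auto)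
  obtain s1 where s1: "t \<le> s1" "s1 \<le> n" "c s1 = j"
    using down[of t n] ends t by auto
  have b: "t \<le> b \<and> b \<le> n \<and> c b = j"
    unfolding b_def by (rule LeastI[of _ s1]) (use s1 in auto)
  have b_min: "b \<le> s" if "t \<le> s" "s \<le> n" "c s = j" for s
    unfolding b_def by (rule Least_le) (use that in auto)
  show "a \<le> t" "c a = j" "t \<le> b" "c b = j"
    using a b by simp_all
  show "b < n"
    using b ends by (cases "b = n") auto
  show "j \<le> c s" if s: "a \<le> s" "s \<le> b" for s
  proof (rule ccontr)
    assume low: "\<not> j \<le> c s"
    show False
    proof (cases "s \<le> t")
      case True
      then obtain s' where s': "s \<le> s'" "s' \<le> t" "c s' = j"
        using up[of s t] low t by auto
      then have "s' = s"
        using a_max[of s'] s by simp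
      with s' low show False
        by simp
    next
      case False
      then obtain s' where s': "t \<le> s'" "s' \<le> s" "c s' = j"
        using down[of t s] low b s t by auto
      then have "s' = s"
        using b_min[of s'] b s by simp
      with s' low show False
        by simp
    qed
  qed
qed

lemma sum_mult_index_eq_sum_tails:
  fixes h :: "nat \<Rightarrow> real"
  shows "(\<Sum>n<M. real n * h n) = (\<Sum>j<M. \<Sum>k<M - Suc j. h (Suc j + k))"
proof (induction M)
  case 0
  then show ?case by simp
next
  case (Suc M)
  have "(\<Sum>j<Suc M. \<Sum>k<Suc M - Suc j. h (Suc j + k)) = (\<Sum>j<M. \<Sum>k<M - j. h (Suc j + k))"
    by simp
  also have "\<dots> = (\<Sum>j<M. (\<Sum>k<M - Suc j. h (Suc j + k)) + h M)"
  proof (rule sum.cong[OF refl])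
    fix j
    assume "j \<in> {..<M}"
    then have "M - j = Suc (M - Suc j)" "Suc j + (M - Suc j) = M"
      by auto
    then show "(\<Sum>k<M - j. h (Suc j + k)) = (\<Sum>k<M - Suc j. h (Suc j + k)) + h M"
      by simp
  qed
  also have "\<dots> = (\<Sum>j<M. \<Sum>k<M - Suc j. h (Suc j + k)) + real M * h M"
    by (simp add: sum.distrib)
  finally show ?case
    using Suc.IH by simp
qed

lemma sum_power_div_le:
  fixes r :: real
  assumes "0 \<le> r" "r < 1" "0 < N"
  shows "(\<Sum>j<M. r ^ (j div N)) \<le> real N / (1 - r)"
proof -
  have "(\<Sum>j<M. r ^ (j div N)) \<le> (\<Sum>j<M * N. r ^ (j div N))"
    by (rule sum_mono2) (use assms in auto)
  also have "\<dots> = (\<Sum>m<M. \<Sum>j\<in>{m * N..<m * N + N}. r ^ (j div N))"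
    by (rule sum.nat_group[symmetric])
  also have "\<dots> = (\<Sum>m<M. real N * r ^ m)"
  proof (rule sum.cong[OF refl])
    fix m
    have "j div N = m" if "j \<in> {m * N..<m * N + N}" for j
      by (rule div_nat_eqI) (use that in \<open>auto simp: algebra_simps\<close>)
    then show "(\<Sum>j\<in>{m * N..<m * N + N}. r ^ (j div N)) = real N * r ^ m"
      by simp
  qed
  also have "\<dots> = real N * ((1 - r ^ M) / (1 - r))"
    using assms by (simp add: sum_gp_strict flip: sum_distrib_left)
  also have "\<dots> \<le> real N / (1 - r)"
    using assms by (simp add: divide_right_mono mult_left_mono)
  finally show ?thesis .
qed

definition step_exp :: "('q::finite \<Rightarrow> int \<Rightarrow> 'q \<Rightarrow> real) \<Rightarrow> 'q \<Rightarrow> (int \<Rightarrow> 'q \<Rightarrow> real) \<Rightarrow> real"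
  where "step_exp Pp r v = (\<Sum>c\<in>{-1,0,1}. \<Sum>s\<in>UNIV. Pp r c s * v c s)"

lemma hit_Suc_step_exp:
  "hit Pp (Suc n) r i q =
    (if i = 0 then 0 else step_exp Pp r (\<lambda>c s. hit Pp n s (nat (int i + c)) q))"
  by (simp add: step_exp_def)

declare hit.simps(2) [simp del] hit_Suc_step_exp [simp]

lemma step_exp_diff: "step_exp Pp r (\<lambda>c s. v c s - w c s) = step_exp Pp r v - step_exp Pp r w"
  by (simp add: step_exp_def right_diff_distrib sum_subtractf)

lemma step_exp_mult_right: "step_exp Pp r (\<lambda>c s. v c s * b) = step_exp Pp r v * b"
  by (simp only: step_exp_def sum_distrib_right mult.assoc)

lemma step_exp_sum: "step_exp Pp r (\<lambda>c s. \<Sum>k\<in>K. v k c s) = (\<Sum>k\<in>K. step_exp Pp r (v k))"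
proof -
  have "(\<Sum>k\<in>K. \<Sum>c\<in>{-1,0,1}. \<Sum>s\<in>UNIV. Pp r c s * v k c s) =
      (\<Sum>c\<in>{-1,0,1}. \<Sum>k\<in>K. \<Sum>s\<in>UNIV. Pp r c s * v k c s)"
    by (rule sum.swap)
  also have "\<dots> = (\<Sum>c\<in>{-1,0,1}. \<Sum>s\<in>UNIV. \<Sum>k\<in>K. Pp r c s * v k c s)"
    by (intro sum.cong refl sum.swap)
  finally show ?thesis
    unfolding step_exp_def sum_distrib_left by (rule sym)
qed

fun survival :: "('q::finite \<Rightarrow> int \<Rightarrow> 'q \<Rightarrow> real) \<Rightarrow> 'q \<Rightarrow> nat \<Rightarrow> 'q \<Rightarrow> nat \<Rightarrow> real" where
  "survival Pp q 0 r i = 1"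
| "survival Pp q (Suc n) r i =
    (if i = 0 \<or> (r, q) \<notin> (Xedges Pp)\<^sup>* then 0
     else step_exp Pp r (\<lambda>c s. survival Pp q n s (nat (int i + c))))"

definition config_step :: "('q::finite \<Rightarrow> int \<Rightarrow> 'q \<Rightarrow> real) \<Rightarrow> (('q \<times> nat) \<times> ('q \<times> nat)) set"
  where "config_step Pp = {((r, i), (s, j)). 0 < i \<and> (\<exists>c. 0 < Pp r c s \<and> int j = int i + c)}"

lemma config_step_shift:
  assumes "(x, y) \<in> config_step Pp" "d < snd x" "d \<le> snd y"
  shows "((fst x, snd x - d), (fst y, snd y - d)) \<in> config_step Pp"
  using assms unfolding config_step_def by auto

locale poc =
  fixes Pz Pp :: "'q::finite \<Rightarrow> int \<Rightarrow> 'q \<Rightarrow> real"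
  assumes poc: "pOC Pz Pp"
begin

lemma Pp_nonneg: "0 \<le> Pp r c s"
proof -
  have "\<forall>p c q. Pz p c q \<ge> 0 \<and> Pp p c q \<ge> 0"
    using poc[unfolded pOC_def] by (rule conjunct1)
  then show ?thesis
    by blast
qed

lemma Pp_support: "0 < Pp r c s \<Longrightarrow> c \<in> {-1, 0, 1}"
proof -
  have "\<forall>p c q. Pp p c q > 0 \<longrightarrow> c \<in> {-1, 0, 1}"
    using poc[unfolded pOC_def] by (elim conjE)
  then show "0 < Pp r c s \<Longrightarrow> c \<in> {-1, 0, 1}"
    by blast
qed

lemma Pz_support: "0 < Pz r c s \<Longrightarrow> c \<in> {0, 1}"
proof -
  have "\<forall>p c q. Pz p c q > 0 \<longrightarrow> c \<in> {0, 1}"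
    using poc[unfolded pOC_def] by (elim conjE)
  then show "0 < Pz r c s \<Longrightarrow> c \<in> {0, 1}"
    by blast
qed

lemma step_exp_const [simp]: "step_exp Pp r (\<lambda>c s. b) = b"
proof -
  have "\<forall>p. (\<Sum>c\<in>{-1,0,1}. \<Sum>q\<in>UNIV. Pp p c q) = 1"
    using poc[unfolded pOC_def] by (elim conjE)
  then show ?thesis
    by (simp add: step_exp_def flip: sum_distrib_right)
qed

lemma step_exp_mono:
  assumes "\<And>c s. v c s \<le> w c s"
  shows "step_exp Pp r v \<le> step_exp Pp r w"
  unfolding step_exp_def by (intro sum_mono mult_left_mono assms Pp_nonneg)

lemma step_exp_nonneg: "(\<And>c s. 0 \<le> v c s) \<Longrightarrow> 0 \<le> step_exp Pp r v"
  using step_exp_mono[of "\<lambda>c s. 0" v r] by simp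

lemma step_exp_le: "(\<And>c s. v c s \<le> b) \<Longrightarrow> step_exp Pp r v \<le> b"
  using step_exp_mono[of v "\<lambda>c s. b" r] by simp

lemma step_exp_ge_term:
  assumes "\<And>c s. 0 \<le> v c s"
  shows "Pp r c s * v c s \<le> step_exp Pp r v"
proof (cases "0 < Pp r c s")
  case True
  have "Pp r c s * v c s \<le> (\<Sum>s'\<in>UNIV. Pp r c s' * v c s')"
    by (rule member_le_sum) (auto intro: mult_nonneg_nonneg Pp_nonneg assms)
  also have "\<dots> \<le> step_exp Pp r v"
    unfolding step_exp_def using Pp_support[OF True]
    by (intro member_le_sum sum_nonneg mult_nonneg_nonneg Pp_nonneg assms) simp_all
  finally show ?thesis .
next
  case False
  then show ?thesis
    using Pp_nonneg[of r c s] step_exp_nonneg[OF assms] by simp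
qed

lemma step_exp_pos_imp:
  assumes "\<And>c s. 0 \<le> v c s" "0 < step_exp Pp r v"
  shows "\<exists>c s. 0 < Pp r c s \<and> 0 < v c s"
proof (rule ccontr)
  assume "\<not> ?thesis"
  then have "Pp r c s * v c s = 0" for c s
    using Pp_nonneg[of r c s] assms(1)[of c s] by (metis less_eq_real_def mult_eq_0_iff)
  then have "step_exp Pp r v = 0"
    unfolding step_exp_def by (simp only: sum.neutral_const)
  with assms(2) show False
    by simp
qed

lemma Pp_le_1: "Pp r c s \<le> 1"
  using step_exp_ge_term[of "\<lambda>c s. 1" r c s] by simp

lemma Pp_edge:
  assumes "0 < Pp r c s"
  shows "(r, s) \<in> Xedges Pp"
proof -
  have "Pp r c s \<le> Xmat Pp r s"
    unfolding Xmat_def using Pp_support[OF assms] by (intro member_le_sum Pp_nonneg) simp_all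
  with assms show ?thesis
    unfolding Xedges_def by simp
qed

lemma edge_Pp:
  assumes "(r, s) \<in> Xedges Pp"
  shows "\<exists>c. 0 < Pp r c s"
proof (rule ccontr)
  assume "\<not> ?thesis"
  then have "Xmat Pp r s \<le> 0"
    unfolding Xmat_def by (intro sum_nonpos) (simp add: not_less)
  with assms show False
    unfolding Xedges_def by simp
qed

lemma Pp_pos_ex: "\<exists>c s. 0 < Pp r c s"
  using step_exp_pos_imp[of "\<lambda>c s. 1" r] by simp

lemma finite_positive_probs:
  "finite ({Pz p c q | p c q. Pz p c q > 0} \<union> {Pp p c q | p c q. Pp p c q > 0})"
proof -
  have "{Pz p c q | p c q. Pz p c q > 0} \<subseteq> (\<lambda>(p, c, q). Pz p c q) ` (UNIV \<times> {0, 1} \<times> UNIV)"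
  proof clarify
    fix p c q
    assume "0 < Pz p c q"
    then have "(p, c, q) \<in> UNIV \<times> {0, 1} \<times> UNIV"
      using Pz_support by simp
    then show "Pz p c q \<in> (\<lambda>(p, c, q). Pz p c q) ` (UNIV \<times> {0, 1} \<times> UNIV)"
      by (rule rev_image_eqI) simp
  qed
  moreover have "{Pp p c q | p c q. Pp p c q > 0} \<subseteq> (\<lambda>(p, c, q). Pp p c q) ` (UNIV \<times> {-1, 0, 1} \<times> UNIV)"
  proof clarify
    fix p c q
    assume "0 < Pp p c q"
    then have "(p, c, q) \<in> UNIV \<times> {-1, 0, 1} \<times> UNIV"
      using Pp_support by simp
    then show "Pp p c q \<in> (\<lambda>(p, c, q). Pp p c q) ` (UNIV \<times> {-1, 0, 1} \<times> UNIV)"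
      by (rule rev_image_eqI) simp
  qed
  ultimately show ?thesis
    by (rule finite_subset[OF Un_mono]) simp
qed

lemma xmin_le_Pp: "0 < Pp r c s \<Longrightarrow> xmin Pz Pp \<le> Pp r c s"
  unfolding xmin_def by (rule Min_le[OF finite_positive_probs]) blast

lemma xmin_pos: "0 < xmin Pz Pp"
proof -
  obtain r c s where "0 < Pp r c s"
    using Pp_pos_ex by blast
  then have "xmin Pz Pp \<in> {Pz p c q | p c q. Pz p c q > 0} \<union> {Pp p c q | p c q. Pp p c q > 0}"
    unfolding xmin_def by (intro Min_in finite_positive_probs) blast
  then show ?thesis
    by auto
qed

lemma xmin_le_1: "xmin Pz Pp \<le> 1"
  using Pp_pos_ex xmin_le_Pp Pp_le_1 by (meson order_trans)

lemma xmin_power_le_1: "xmin Pz Pp ^ n \<le> 1"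
  using xmin_pos xmin_le_1 by (simp add: power_le_one)

section \<open>Survival probability\<close>

lemma hit_nonneg: "0 \<le> hit Pp n r i q"
  by (induction n arbitrary: r i) (simp_all add: step_exp_nonneg)

lemma hit_unreachable:
  assumes "(r, q) \<notin> (Xedges Pp)\<^sup>*"
  shows "hit Pp n r i q = 0"
  using assms
proof (induction n arbitrary: r i)
  case 0
  then show ?case by auto
next
  case (Suc n)
  have zero: "Pp r c s * hit Pp n s (nat (int i + c)) q = 0" for c s
  proof (cases "0 < Pp r c s")
    case True
    then have "(s, q) \<notin> (Xedges Pp)\<^sup>*"
      using Suc.prems Pp_edge by (meson converse_rtrancl_into_rtrancl)
    then show ?thesis
      using Suc.IH by simp
  next
    case False
    then show ?thesis
      using Pp_nonneg[of r c s] by simp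
  qed
  then have "step_exp Pp r (\<lambda>c s. hit Pp n s (nat (int i + c)) q) = 0"
    unfolding step_exp_def by (simp only: zero sum.neutral_const)
  then show ?case
    by simp
qed

lemma hit_partial_sum_le_1: "(\<Sum>k<K. hit Pp k r i q) \<le> 1"
proof (induction K arbitrary: r i)
  case 0
  then show ?case by simp
next
  case (Suc K)
  have "(\<Sum>k<Suc K. hit Pp k r i q) = hit Pp 0 r i q + (\<Sum>k<K. hit Pp (Suc k) r i q)"
    by (rule sum.lessThan_Suc_shift)
  also have "\<dots> \<le> 1"
  proof (cases "i = 0")
    case False
    then have "(\<Sum>k<K. hit Pp (Suc k) r i q) =
        step_exp Pp r (\<lambda>c s. \<Sum>k<K. hit Pp k s (nat (int i + c)) q)"
      by (simp add: step_exp_sum)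
    also have "\<dots> \<le> 1"
      by (rule step_exp_le) (rule Suc.IH)
    finally show ?thesis
      using False by simp
  qed simp
  finally show ?case .
qed

lemma survival_le_1: "survival Pp q n r i \<le> 1"
  by (induction n arbitrary: r i) (simp_all add: step_exp_le)

lemma hit_tail_le_survival: "(\<Sum>k<K. hit Pp (n + k) r i q) \<le> survival Pp q n r i"
proof (induction n arbitrary: r i)
  case 0
  then show ?case
    using hit_partial_sum_le_1 by simp
next
  case (Suc n)
  show ?case
  proof (cases "i = 0 \<or> (r, q) \<notin> (Xedges Pp)\<^sup>*")
    case True
    have "hit Pp (Suc n + k) r i q = 0" for k
    proof (cases "i = 0")
      case False
      with True show ?thesis
        by (intro hit_unreachable) simp
    qed simp
    with True show ?thesis
      by simp
  next
    case False
    then have "(\<Sum>k<K. hit Pp (Suc n + k) r i q) =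
        step_exp Pp r (\<lambda>c s. \<Sum>k<K. hit Pp (n + k) s (nat (int i + c)) q)"
      by (simp add: step_exp_sum)
    also have "\<dots> \<le> step_exp Pp r (\<lambda>c s. survival Pp q n s (nat (int i + c)))"
      by (rule step_exp_mono) (rule Suc.IH)
    finally show ?thesis
      using False by simp
  qed
qed

lemma survival_add_le:
  assumes "\<And>s j. survival Pp q n s j \<le> b"
  shows "survival Pp q (m + n) r i \<le> survival Pp q m r i * b"
proof (induction m arbitrary: r i)
  case 0
  then show ?case
    using assms by simp
next
  case (Suc m)
  have "step_exp Pp r (\<lambda>c s. survival Pp q (m + n) s (nat (int i + c))) \<le>
      step_exp Pp r (\<lambda>c s. survival Pp q m s (nat (int i + c)) * b)"
    by (rule step_exp_mono) (rule Suc.IH)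
  then show ?case
    by (simp add: step_exp_mult_right)
qed

lemma survival_escape:
  assumes "(r, s) \<in> Xedges Pp ^^ k" "(s, q) \<notin> (Xedges Pp)\<^sup>*" "k < m"
  shows "survival Pp q m r i \<le> 1 - xmin Pz Pp ^ k"
  using assms(1,3)
proof (induction k arbitrary: r i m)
  case 0
  then obtain m' where "m = Suc m'"
    using not0_implies_Suc by blast
  then show ?case
    using 0 assms(2) by simp
next
  case (Suc k)
  obtain r' where r': "(r, r') \<in> Xedges Pp" "(r', s) \<in> Xedges Pp ^^ k"
    using relpow_Suc_D2[OF Suc.prems(1)] by blast
  obtain m' where m': "m = Suc m'" "k < m'"
    using Suc.prems(2) by (cases m) auto
  obtain c where c: "0 < Pp r c r'"
    using edge_Pp[OF r'(1)] by blast
  let ?v = "\<lambda>c s. 1 - survival Pp q m' s (nat (int i + c))"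
  have "xmin Pz Pp ^ Suc k = xmin Pz Pp * xmin Pz Pp ^ k"
    by simp
  also have "\<dots> \<le> Pp r c r' * ?v c r'"
    using Suc.IH[OF r'(2) m'(2), of "nat (int i + c)"] xmin_le_Pp[OF c] xmin_pos
    by (intro mult_mono) simp_all
  also have "\<dots> \<le> step_exp Pp r ?v"
    by (rule step_exp_ge_term) (simp add: survival_le_1)
  also have "\<dots> = 1 - step_exp Pp r (\<lambda>c s. survival Pp q m' s (nat (int i + c)))"
    by (simp add: step_exp_diff)
  finally show ?case
    using m' xmin_power_le_1[of "Suc k"] by auto
qed

lemma survival_card_le:
  assumes "\<not> in_bscc Pp q"
  shows "survival Pp q CARD('q) r i \<le> 1 - xmin Pz Pp ^ CARD('q)"
proof (cases "(r, q) \<in> (Xedges Pp)\<^sup>*")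
  case True
  obtain s where s: "(q, s) \<in> (Xedges Pp)\<^sup>*" "(s, q) \<notin> (Xedges Pp)\<^sup>*"
    using assms unfolding in_bscc_def by blast
  obtain k where k: "k < CARD('q)" "(r, s) \<in> Xedges Pp ^^ k"
    using rtrancl_relpow_less_card rtrancl_trans[OF True s(1)] by blast
  have "survival Pp q CARD('q) r i \<le> 1 - xmin Pz Pp ^ k"
    by (rule survival_escape[OF k(2) s(2) k(1)])
  also have "\<dots> \<le> 1 - xmin Pz Pp ^ CARD('q)"
    using k(1) xmin_pos xmin_le_1 by (simp add: power_decreasing)
  finally show ?thesis .
next
  case False
  then show ?thesis
    using xmin_power_le_1[of "CARD('q)"] by (cases "CARD('q)") simp_all
qed

lemma survival_decay:
  assumes "\<not> in_bscc Pp q"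
  shows "survival Pp q n r i \<le> (1 - xmin Pz Pp ^ CARD('q)) ^ (n div CARD('q))"
proof -
  let ?\<rho> = "1 - xmin Pz Pp ^ CARD('q)"
  have \<rho>: "0 \<le> ?\<rho>"
    using xmin_power_le_1 by simp
  have "survival Pp q (k * CARD('q) + l) r i \<le> ?\<rho> ^ k" for k l r i
  proof (induction k arbitrary: r i)
    case 0
    then show ?case
      by (simp add: survival_le_1)
  next
    case (Suc k)
    have "survival Pp q (CARD('q) + (k * CARD('q) + l)) r i \<le> survival Pp q CARD('q) r i * ?\<rho> ^ k"
      by (rule survival_add_le) (rule Suc.IH)
    also have "\<dots> \<le> ?\<rho> * ?\<rho> ^ k"
      using \<rho> by (intro mult_right_mono survival_card_le assms) simp
    finally show ?case
      by (simp add: add.assoc)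
  qed
  from this[of "n div CARD('q)" "n mod CARD('q)"] show ?thesis
    by simp
qed

section \<open>Short runs to \<open>q(0)\<close>\<close>

lemma config_step_counter:
  assumes "(x, y) \<in> config_step Pp"
  shows "0 < snd x" "snd y \<le> snd x + 1" "snd x \<le> snd y + 1"
proof -
  obtain r i s j c where step: "x = (r, i)" "y = (s, j)" "0 < i" "0 < Pp r c s" "int j = int i + c"
    using assms unfolding config_step_def by auto
  moreover have "c \<in> {-1, 0, 1}"
    using Pp_support step(4) .
  ultimately show "0 < snd x" "snd y \<le> snd x + 1" "snd x \<le> snd y + 1"
    by auto
qed

lemma hit_pos_config_path: "0 < hit Pp n r i q \<Longrightarrow> ((r, i), (q, 0)) \<in> config_step Pp ^^ n"
proof (induction n arbitrary: r i)
  case 0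
  then show ?case
    by (simp split: if_splits)
next
  case (Suc n)
  then have i: "i \<noteq> 0"
    by (auto split: if_splits)
  with Suc.prems have "0 < step_exp Pp r (\<lambda>c s. hit Pp n s (nat (int i + c)) q)"
    by simp
  then have "\<exists>c s. 0 < Pp r c s \<and> 0 < hit Pp n s (nat (int i + c)) q"
    by (rule step_exp_pos_imp[rotated]) (rule hit_nonneg)
  then obtain c s where cs: "0 < Pp r c s" "0 < hit Pp n s (nat (int i + c)) q"
    by blast
  then have "int (nat (int i + c)) = int i + c"
    using i Pp_support[OF cs(1)] by auto
  then have "((r, i), (s, nat (int i + c))) \<in> config_step Pp"
    unfolding config_step_def using cs(1) i by auto
  then show ?case
    using Suc.IH[OF cs(2)] by (rule relpow_Suc_I2)
qed

lemma config_path_hit_ge: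
  "((r, i), (q, 0)) \<in> config_step Pp ^^ n \<Longrightarrow> xmin Pz Pp ^ n \<le> hit Pp n r i q"
proof (induction n arbitrary: r i)
  case 0
  then show ?case
    by simp
next
  case (Suc n)
  obtain y where y: "((r, i), y) \<in> config_step Pp" "(y, (q, 0)) \<in> config_step Pp ^^ n"
    using relpow_Suc_D2[OF Suc.prems] by blast
  then obtain s j c where step: "y = (s, j)" "0 < i" "0 < Pp r c s" "int j = int i + c"
    unfolding config_step_def by auto
  have j: "nat (int i + c) = j"
    using step(4) by simp
  have IH: "xmin Pz Pp ^ n \<le> hit Pp n s j q"
    using Suc.IH y(2) step(1) by simp
  have "xmin Pz Pp ^ Suc n = xmin Pz Pp * xmin Pz Pp ^ n"
    by simp
  also have "\<dots> \<le> Pp r c s * hit Pp n s (nat (int i + c)) q"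
    unfolding j using xmin_le_Pp[OF step(3)] xmin_pos IH by (intro mult_mono) simp_all
  also have "\<dots> \<le> step_exp Pp r (\<lambda>c s. hit Pp n s (nat (int i + c)) q)"
    by (rule step_exp_ge_term) (rule hit_nonneg)
  also have "\<dots> = hit Pp (Suc n) r i q"
    using step(2) by simp
  finally show ?case .
qed

text \<open>A path that rises above level \<open>|Q|^2\<close> crosses, for each level \<open>j\<close> below its peak, a
  window in which it stays at least \<open>j\<close> and which it enters and leaves at level \<open>j\<close>. Two levels
  \<open>j < j'\<close> enter and leave in the same pair of states, so the outer window can be replaced by
  the inner one lowered by \<open>j' - j\<close>.\<close>

lemma config_path_high_shortcut:
  assumes path: "\<forall>s<n. (f s, f (Suc s)) \<in> config_step Pp"
    and ends: "f 0 = (p, 1)" "f n = (q, 0)"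
    and high: "t \<le> n" "CARD('q)^2 < snd (f t)"
  shows "\<exists>n'<n. ((p, 1), (q, 0)) \<in> config_step Pp ^^ n'"
proof -
  let ?c = "\<lambda>s. snd (f s)"
  let ?J = "{1..?c t}"
  have steps: "?c (Suc s) \<le> ?c s + 1 \<and> ?c s \<le> ?c (Suc s) + 1" if "s < n" for s
    using config_step_counter(2,3)[of "f s" "f (Suc s)"] path that by simp
  define A where "A j = (GREATEST s. s \<le> t \<and> ?c s = j)" for j
  define B where "B j = (LEAST s. t \<le> s \<and> s \<le> n \<and> ?c s = j)" for j
  have win: "A j \<le> t" "t \<le> B j" "B j < n" "?c (A j) = j" "?c (B j) = j"
      "\<And>s. A j \<le> s \<Longrightarrow> s \<le> B j \<Longrightarrow> j \<le> ?c s" if "j \<in> ?J" for j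
  proof -
    have "?c 0 \<le> j" "?c n < j" "j \<le> ?c t"
      using that ends by simp_all
    from level_crossing_window[OF steps this(1,2) high(1) this(3)]
    show "A j \<le> t" "t \<le> B j" "B j < n" "?c (A j) = j" "?c (B j) = j"
        "\<And>s. A j \<le> s \<Longrightarrow> s \<le> B j \<Longrightarrow> j \<le> ?c s"
      unfolding A_def B_def by simp_all
  qed
  define ends_of where "ends_of j = (fst (f (A j)), fst (f (B j)))" for j
  have "\<not> inj_on ends_of ?J"
  proof
    assume "inj_on ends_of ?J"
    then have "card ?J \<le> card (UNIV :: ('q \<times> 'q) set)"
      by (rule card_inj_on_le) auto
    with high(2) show False
      by (simp add: card_prod power2_eq_square)
  qed
  then obtain j j' where jj: "j \<in> ?J" "j' \<in> ?J" "j < j'" "ends_of j = ends_of j'"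
  proof -
    obtain x y where "x \<in> ?J" "y \<in> ?J" "x \<noteq> y" "ends_of x = ends_of y"
      using \<open>\<not> inj_on ends_of ?J\<close> unfolding inj_on_def by blast
    then show thesis
      using that[of x y] that[of y x] by (cases "x < y") auto
  qed
  have nested: "A j < A j'" "B j' < B j"
  proof (rule_tac [!] ccontr)
    assume "\<not> A j < A j'"
    then have "j' \<le> ?c (A j)"
      using win(1,2)[OF jj(1)] win(2)[OF jj(2)] by (intro win(6)[OF jj(2)]) simp_all
    with win(4)[OF jj(1)] jj(3) show False
      by simp
  next
    assume "\<not> B j' < B j"
    then have "j' \<le> ?c (B j)"
      using win(1)[OF jj(2)] win(2)[OF jj(1)] by (intro win(6)[OF jj(2)]) simp_all
    with win(5)[OF jj(1)] jj(3) show False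
      by simp
  qed
  define lower where "lower x = (fst x, snd x - (j' - j))" for x :: "'q \<times> nat"
  have lowered_steps: "(lower (f u), lower (f (Suc u))) \<in> config_step Pp"
    if "A j' \<le> u" "u < B j'" for u
  proof -
    have "j' \<le> ?c u" "j' \<le> ?c (Suc u)"
      using that by (intro win(6)[OF jj(2)]; simp)+
    moreover have "(f u, f (Suc u)) \<in> config_step Pp"
      using path that win(3)[OF jj(2)] by simp
    ultimately show ?thesis
      unfolding lower_def using jj(1,3) by (intro config_step_shift) auto
  qed
  have glue: "lower (f (A j')) = f (A j)" "lower (f (B j')) = f (B j)"
    using jj(3,4) win(4,5)[OF jj(1)] win(4,5)[OF jj(2)]
    by (simp_all add: lower_def ends_of_def prod_eq_iff)
  have bounds: "A j \<le> n" "A j' \<le> B j'" "B j \<le> n"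
    using win(1,3)[OF jj(1)] win(1,2)[OF jj(2)] high(1) by linarith+
  obtain g where g: "g 0 = f 0" "g (A j + (B j' - A j') + (n - B j)) = f n"
      "\<forall>i < A j + (B j' - A j') + (n - B j). (g i, g (Suc i)) \<in> config_step Pp"
    using path_splice[OF path bounds lowered_steps glue] by blast
  then have "((p, 1), (q, 0)) \<in> config_step Pp ^^ (A j + (B j' - A j') + (n - B j))"
    unfolding relpow_fun_conv using ends by (intro exI[of _ g]) simp
  moreover have "A j + (B j' - A j') + (n - B j) < n"
    using nested win(1,2,3)[OF jj(2)] win(3)[OF jj(1)] by linarith
  ultimately show ?thesis
    by blast
qed

lemma config_path_short:
  assumes "((p, 1), (q, 0)) \<in> config_step Pp ^^ n"
  shows "\<exists>m \<le> CARD('q)^3. ((p, 1), (q, 0)) \<in> config_step Pp ^^ m"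
proof -
  define m where "m = (LEAST m. ((p, 1), (q, 0)) \<in> config_step Pp ^^ m)"
  have m: "((p, 1), (q, 0)) \<in> config_step Pp ^^ m"
    unfolding m_def by (rule LeastI) fact
  have no_shorter: "((p, 1), (q, 0)) \<notin> config_step Pp ^^ k" if "k < m" for k
    using not_less_Least that unfolding m_def by blast
  obtain f where f: "f 0 = (p, 1)" "f m = (q, 0)" "\<forall>i<m. (f i, f (Suc i)) \<in> config_step Pp"
    using m unfolding relpow_fun_conv by blast
  have "inj_on f {..<m}"
    using minimal_path_inj[OF f(3)] no_shorter f(1,2) by (auto intro: inj_on_subset)
  moreover have "f ` {..<m} \<subseteq> UNIV \<times> {1..CARD('q)^2}"
  proof
    fix z
    assume "z \<in> f ` {..<m}"
    then obtain t where t: "t < m" "z = f t"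
      by blast
    have "0 < snd (f t)"
      using config_step_counter(1)[OF f(3)[rule_format, OF t(1)]] .
    moreover have "snd (f t) \<le> CARD('q)^2"
    proof (rule ccontr)
      assume "\<not> snd (f t) \<le> CARD('q)^2"
      then obtain n' where "n' < m" "((p, 1), (q, 0)) \<in> config_step Pp ^^ n'"
        using config_path_high_shortcut[OF f(3,1,2), of t] t(1) by auto
      with no_shorter show False
        by blast
    qed
    ultimately show "z \<in> UNIV \<times> {1..CARD('q)^2}"
      using t(2) by (simp add: mem_Times_iff)
  qed
  ultimately have "card {..<m} \<le> card (UNIV \<times> {1..CARD('q)^2} :: ('q \<times> nat) set)"
    by (rule card_inj_on_le) simp
  then have "m \<le> CARD('q)^3"
    by (simp add: card_cartesian_product power2_eq_square power3_eq_cube)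
  with m show ?thesis
    by blast
qed

section \<open>Expected termination time\<close>

lemma summable_hit: "summable (\<lambda>n. hit Pp n p i q)"
  by (rule summableI_nonneg_bounded[OF hit_nonneg hit_partial_sum_le_1])

lemma termprob_ge:
  assumes "0 < termprob Pp p q"
  shows "xmin Pz Pp ^ (CARD('q)^3) \<le> termprob Pp p q"
proof -
  have "\<exists>n. 0 < hit Pp n p 1 q"
  proof (rule ccontr)
    assume "\<not> ?thesis"
    then have "(\<lambda>n. hit Pp n p 1 q) = (\<lambda>n. 0)"
      using hit_nonneg by (intro ext) (meson antisym not_less)
    with assms show False
      unfolding termprob_def by simp
  qed
  then obtain n where "0 < hit Pp n p 1 q"
    by blast
  then obtain m where m: "m \<le> CARD('q)^3" "((p, 1), (q, 0)) \<in> config_step Pp ^^ m"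
    using config_path_short[OF hit_pos_config_path] by blast
  have "xmin Pz Pp ^ (CARD('q)^3) \<le> xmin Pz Pp ^ m"
    using m(1) xmin_pos xmin_le_1 by (intro power_decreasing) simp_all
  also have "\<dots> \<le> hit Pp m p 1 q"
    by (rule config_path_hit_ge[OF m(2)])
  also have "\<dots> \<le> termprob Pp p q"
    unfolding termprob_def using sum_le_suminf[OF summable_hit, of "{m}"] hit_nonneg by simp
  finally show ?thesis .
qed

lemma weighted_hit_sum_le:
  assumes "\<not> in_bscc Pp q"
  shows "(\<Sum>n<M. real n * hit Pp n p 1 q) \<le> real CARD('q) / xmin Pz Pp ^ CARD('q)"
proof -
  define \<rho> where "\<rho> = 1 - xmin Pz Pp ^ CARD('q)"
  have \<rho>: "0 \<le> \<rho>" "\<rho> < 1"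
    unfolding \<rho>_def using xmin_pos xmin_power_le_1 by auto
  have "(\<Sum>n<M. real n * hit Pp n p 1 q) = (\<Sum>j<M. \<Sum>k<M - Suc j. hit Pp (Suc j + k) p 1 q)"
    by (rule sum_mult_index_eq_sum_tails)
  also have "\<dots> \<le> (\<Sum>j<M. \<rho> ^ (j div CARD('q)))"
  proof (rule sum_mono)
    fix j
    have "(\<Sum>k<M - Suc j. hit Pp (Suc j + k) p 1 q) \<le> survival Pp q (Suc j) p 1"
      by (rule hit_tail_le_survival)
    also have "\<dots> \<le> \<rho> ^ (Suc j div CARD('q))"
      unfolding \<rho>_def by (rule survival_decay[OF assms])
    also have "\<dots> \<le> \<rho> ^ (j div CARD('q))"
      using \<rho> by (intro power_decreasing div_le_mono) auto
    finally show "(\<Sum>k<M - Suc j. hit Pp (Suc j + k) p 1 q) \<le> \<rho> ^ (j div CARD('q))" .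
  qed
  also have "\<dots> \<le> real CARD('q) / (1 - \<rho>)"
    using \<rho> by (intro sum_power_div_le) auto
  finally show ?thesis
    unfolding \<rho>_def by simp
qed

lemma condexp_le:
  assumes "0 < termprob Pp p q" "\<not> in_bscc Pp q"
  shows "condexp Pp p q \<le> ennreal (real CARD('q) / xmin Pz Pp ^ (CARD('q) + CARD('q)^3))"
proof -
  define w where "w n = real n * hit Pp n p 1 q" for n
  have w_nonneg: "0 \<le> w n" for n
    unfolding w_def by (simp add: hit_nonneg)
  have w_bound: "sum w {..<M} \<le> real CARD('q) / xmin Pz Pp ^ CARD('q)" for M
    unfolding w_def by (rule weighted_hit_sum_le[OF assms(2)])
  have w_summable: "summable w"
    by (rule summableI_nonneg_bounded[OF w_nonneg w_bound])
  have "condexp Pp p q = ennreal (suminf w / termprob Pp p q)"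
    unfolding condexp_def w_def[symmetric] suminf_ennreal2[OF w_nonneg w_summable]
    by (rule divide_ennreal[OF suminf_nonneg[OF w_summable w_nonneg] assms(1)])
  also have "suminf w / termprob Pp p q \<le>
      (real CARD('q) / xmin Pz Pp ^ CARD('q)) / xmin Pz Pp ^ (CARD('q)^3)"
    using suminf_le_const[OF w_summable w_bound] suminf_nonneg[OF w_summable w_nonneg]
      termprob_ge[OF assms(1)] xmin_pos
    by (intro frac_le) simp_all
  finally show ?thesis
    by (simp add: power_add ennreal_leI)
qed

end

theorem mainTheorem4:
  fixes Pz Pp :: "'q::finite \<Rightarrow> int \<Rightarrow> 'q \<Rightarrow> real" and p q :: 'q
  assumes "pOC Pz Pp"
    and "termprob Pp p q > 0"
    and "\<not> in_bscc Pp q"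
  shows "condexp Pp p q \<le>
    ennreal (5 * real CARD('q) / xmin Pz Pp ^ (CARD('q) + CARD('q) ^ 3))"
proof -
  interpret poc Pz Pp
    by (rule poc.intro) fact
  have "condexp Pp p q \<le> ennreal (real CARD('q) / xmin Pz Pp ^ (CARD('q) + CARD('q)^3))"
    using condexp_le assms(2,3) by blast
  also have "\<dots> \<le> ennreal (5 * real CARD('q) / xmin Pz Pp ^ (CARD('q) + CARD('q)^3))"
    using xmin_pos by (intro ennreal_leI divide_right_mono) simp_all
  finally show ?thesis .
qed

end
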